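(* For all integers $p\ge1$ and $M,N\ge1$, $\lim_{r\to\infty}d_p^r(M,N)=\delta_p(M,N)$.
   Context: For integers $M,N,p,r\ge1$, consider triples $(i,a,b)$ with $i\in\mathbb Z_M^r$, $a\in\mathbb Z_M^p$, $b\in\mathbb Z_N^p$, with cyclic conventions $i_{r+1}=i_1$, $b_{p+1}=b_1$. For $x\in\{1,\dots,r\}$, condition $(E_x)$ says that the multisets $\{(i_x+a_y,b_y),(i_{x+1}+a_y,b_{y+1}):y=1,\dots,p\}$ and $\{(i_x+a_y,b_{y+1}),(i_{x+1}+a_y,b_y):y=1,\dots,p\}$ of elements of $\mathbb Z_M\times\mathbb Z_N$ (counted with multiplicity) coincide. Define $d_p^r(M,N)=\frac{1}{M^{p+r}N^p}\#\{(i,a,b):(E_x)\text{ holds for all }x\}$ and $\delta_p(M,N)=\frac{1}{(MN)^p}\#\{(a,b)\in\mathbb Z_M^p\times\mathbb Z_N^p:\{(a_y,b_y)\}_{y=1}^p=\{(a_y,b_{y+1})\}_{y=1}^p\text{ as multisets}\}$. *)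

theory Defs
  imports Complex_Main "HOL-Library.Multiset" "HOL-Library.FuncSet"
begin

text \<open>Elements of Z_M are represented by 0..<M (arithmetic mod M); tuples in Z_M^r are
  extensional functions {0..<r} -> {0..<M}, indices 0-based, cyclic successor (x+1) mod r.\<close>

definition cond_E :: "nat \<Rightarrow> nat \<Rightarrow> nat \<Rightarrow> nat \<Rightarrow> (nat \<Rightarrow> nat) \<Rightarrow> (nat \<Rightarrow> nat) \<Rightarrow> (nat \<Rightarrow> nat) \<Rightarrow> nat \<Rightarrow> bool" where
  "cond_E M N p r i a b x \<longleftrightarrow>
     (\<Sum>y<p. {# ((i x + a y) mod M, b y), ((i ((x+1) mod r) + a y) mod M, b ((y+1) mod p)) #})
   = (\<Sum>y<p. {# ((i x + a y) mod M, b ((y+1) mod p)), ((i ((x+1) mod r) + a y) mod M, b y) #})"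

definition d_pr :: "nat \<Rightarrow> nat \<Rightarrow> nat \<Rightarrow> nat \<Rightarrow> real" where
  "d_pr p r M N =
     real (card {(i, a, b). i \<in> {0..<r} \<rightarrow>\<^sub>E {0..<M} \<and> a \<in> {0..<p} \<rightarrow>\<^sub>E {0..<M} \<and>
                b \<in> {0..<p} \<rightarrow>\<^sub>E {0..<N} \<and> (\<forall>x<r. cond_E M N p r i a b x)})
     / (real M ^ (p + r) * real N ^ p)"

definition delta_p :: "nat \<Rightarrow> nat \<Rightarrow> nat \<Rightarrow> real" where
  "delta_p p M N =
     real (card {(a, b). a \<in> {0..<p} \<rightarrow>\<^sub>E {0..<M} \<and> b \<in> {0..<p} \<rightarrow>\<^sub>E {0..<N} \<and>
                (\<Sum>y<p. {# (a y, b y) #}) = (\<Sum>y<p. {# (a y, b ((y+1) mod p)) #})})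
     / (real M * real N) ^ p"

end

theory Submission
  imports Defs
begin

text \<open>For fixed (a, b), condition (E_x) depends only on the consecutive pair (i_x, i_{x+1}):
  with X_u = {(u + a_y, b_y)} and Y_u = {(u + a_y, b_{y+1})} it reads X_u + Y_v = Y_u + X_v.
  All pairs (u, v) satisfy this exactly when X_0 = Y_0, i.e. when (a, b) is counted by delta_p, and
  then all M^r tuples i are admissible. For any other (a, b) some pair (u_0, v_0) violates it, so i
  must avoid (u_0, v_0) at each of the r div 2 disjoint positions (2k, 2k+1); this leaves at most
  M (M^2 - 1)^(r div 2) = o(M^r) tuples.\<close>

lemma sum_rotate_lessThan:
  fixes F :: "nat \<Rightarrow> 'b::comm_monoid_add"
  shows "(\<Sum>v<n. F ((v + 1) mod n)) = (\<Sum>v<n. F v)"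
proof (cases n)
  case (Suc m)
  have "(\<Sum>v<Suc m. F ((v + 1) mod Suc m)) = (\<Sum>v<m. F ((v + 1) mod Suc m)) + F 0"
    by (simp add: sum.lessThan_Suc)
  also have "(\<Sum>v<m. F ((v + 1) mod Suc m)) = (\<Sum>v<m. F (Suc v))"
    by (rule sum.cong) auto
  also have "\<dots> + F 0 = (\<Sum>v<Suc m. F v)"
    by (subst sum.lessThan_Suc_shift) (simp add: add.commute)
  finally show ?thesis using Suc by simp
qed simp

lemma sum_mod_shift_lessThan:
  fixes F :: "nat \<Rightarrow> 'b::comm_monoid_add"
  shows "(\<Sum>v<n. F ((v + k) mod n)) = (\<Sum>v<n. F v)"
proof (induction k)
  case (Suc k)
  have "(\<Sum>v<n. F ((v + Suc k) mod n)) = (\<Sum>v<n. (\<lambda>w. F ((w + k) mod n)) ((v + 1) mod n))"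
    by (simp add: mod_add_left_eq)
  also have "\<dots> = (\<Sum>v<n. F ((v + k) mod n))" by (rule sum_rotate_lessThan)
  finally show ?case using Suc by simp
qed (intro sum.cong; simp)

definition shifted_mset :: "nat \<Rightarrow> nat \<Rightarrow> (nat \<Rightarrow> nat) \<Rightarrow> (nat \<Rightarrow> nat) \<Rightarrow> nat \<Rightarrow> (nat \<times> nat) multiset" where
  "shifted_mset M p a c u = (\<Sum>y<p. {# ((u + a y) mod M, c y) #})"

definition compatible :: "nat \<Rightarrow> nat \<Rightarrow> (nat \<Rightarrow> nat) \<Rightarrow> (nat \<Rightarrow> nat) \<Rightarrow> nat \<Rightarrow> nat \<Rightarrow> bool" where
  "compatible M p a b u v \<longleftrightarrow>
     shifted_mset M p a b u + shifted_mset M p a (\<lambda>y. b ((y+1) mod p)) v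
   = shifted_mset M p a (\<lambda>y. b ((y+1) mod p)) u + shifted_mset M p a b v"

lemma cond_E_iff_compatible:
  "cond_E M N p r i a b x \<longleftrightarrow> compatible M p a b (i x) (i ((x+1) mod r))"
proof -
  have pair: "\<And>s t. {#s, t#} = {#s#} + {#t#}" by simp
  show ?thesis
    unfolding cond_E_def compatible_def shifted_mset_def pair sum.distrib
    by (simp add: ac_simps)
qed

lemma shifted_mset_eq_image:
  "shifted_mset M p a c u = image_mset (\<lambda>(s, t). ((u + s) mod M, t)) (\<Sum>y<p. {#(a y, c y)#})"
  unfolding shifted_mset_def by (induction p) auto

lemma shifted_mset_0:
  assumes "\<forall>y<p. a y < M"
  shows "shifted_mset M p a c 0 = (\<Sum>y<p. {#(a y, c y)#})"
  unfolding shifted_mset_def using assms by (intro sum.cong) auto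

lemma sum_shifted_mset:
  "(\<Sum>u<M. shifted_mset M p a c u) = (\<Sum>y<p. \<Sum>s<M. {#(s, c y)#})"
proof -
  have "(\<Sum>u<M. {#((u + a y) mod M, c y)#}) = (\<Sum>s<M. {#(s, c y)#})" for y
    by (rule sum_mod_shift_lessThan[where F = "\<lambda>s. {#(s, c y)#}"])
  then show ?thesis
    unfolding shifted_mset_def by (subst sum.swap) simp
qed

lemma sum_shifted_mset_rotate:
  "(\<Sum>u<M. shifted_mset M p a (\<lambda>y. b ((y+1) mod p)) u) = (\<Sum>u<M. shifted_mset M p a b u)"
  unfolding sum_shifted_mset by (rule sum_mod_shift_lessThan)

text \<open>Every b-value meets every residue once when u runs over Z_M, so the translates of X and of
  Y have the same sum; summing X_0 + Y_v = Y_0 + X_v over v then gives M X_0 = M Y_0.\<close>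

lemma all_compatible_iff:
  assumes a: "\<forall>y<p. a y < M" and "M \<ge> 1"
  shows "(\<forall>u<M. \<forall>v<M. compatible M p a b u v) \<longleftrightarrow>
     (\<Sum>y<p. {#(a y, b y)#}) = (\<Sum>y<p. {#(a y, b ((y+1) mod p))#})"
    (is "_ \<longleftrightarrow> ?X = ?Y")
proof
  let ?b' = "\<lambda>y. b ((y+1) mod p)"
  assume compat: "\<forall>u<M. \<forall>v<M. compatible M p a b u v"
  have "?X + shifted_mset M p a ?b' v = ?Y + shifted_mset M p a b v" if "v < M" for v
    using compat \<open>M \<ge> 1\<close> that
    unfolding compatible_def shifted_mset_0[OF a, symmetric] by simp
  then have "(\<Sum>v<M. ?X + shifted_mset M p a ?b' v) = (\<Sum>v<M. ?Y + shifted_mset M p a b v)"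
    by (intro sum.cong) simp_all
  moreover have repeat: "(\<Sum>v<n. X) = repeat_mset n X" for n and X :: "(nat \<times> nat) multiset"
    by (induction n) auto
  ultimately have "repeat_mset M ?X = repeat_mset M ?Y"
    by (simp only: sum.distrib repeat sum_shifted_mset_rotate add_right_cancel)
  then have "M * count ?X z = M * count ?Y z" for z
    unfolding count_repeat_mset[symmetric] by (rule arg_cong)
  moreover have "M * m = M * n \<Longrightarrow> m = n" for m n :: nat
    using \<open>M \<ge> 1\<close> by simp
  ultimately show "?X = ?Y"
    by (intro multiset_eqI) blast
next
  assume "?X = ?Y"
  then have "shifted_mset M p a b u = shifted_mset M p a (\<lambda>y. b ((y+1) mod p)) u" for u
    by (simp only: shifted_mset_eq_image)
  then show "\<forall>u<M. \<forall>v<M. compatible M p a b u v"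
    unfolding compatible_def by (simp add: add.commute)
qed

definition pair_avoiding :: "nat \<Rightarrow> nat \<Rightarrow> nat \<Rightarrow> nat \<Rightarrow> (nat \<Rightarrow> nat) set" where
  "pair_avoiding M u v n =
     {i \<in> {0..<2*n} \<rightarrow>\<^sub>E {0..<M}. \<forall>k<n. (i (2*k), i (2*k + 1)) \<noteq> (u, v)}"

lemma finite_pair_avoiding: "finite (pair_avoiding M u v n)"
  unfolding pair_avoiding_def
  by (rule finite_subset[OF _ finite_PiE[of "{0..<2*n}" "\<lambda>_. {0..<M}"]]) auto

lemma card_pair_avoiding_le:
  assumes "u < M" "v < M"
  shows "card (pair_avoiding M u v n) \<le> (M*M - 1)^n"
proof (induction n)
  case 0
  have "pair_avoiding M u v 0 = {\<lambda>_. undefined}"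
    by (auto simp: pair_avoiding_def)
  then show ?case by simp
next
  case (Suc n)
  let ?Q = "{0..<M} \<times> {0..<M} - {(u, v)}"
  define split where "split i = (restrict i {0..<2*n}, (i (2*n), i (2*n + 1)))" for i :: "nat \<Rightarrow> nat"
  have "split i \<in> pair_avoiding M u v n \<times> ?Q" if i: "i \<in> pair_avoiding M u v (Suc n)" for i
  proof -
    have "i \<in> {0..<2*n + 2} \<rightarrow>\<^sub>E {0..<M}" "\<forall>k<Suc n. (i (2*k), i (2*k + 1)) \<noteq> (u, v)"
      using i by (simp_all add: pair_avoiding_def)
    then show ?thesis
      by (auto simp: pair_avoiding_def split_def PiE_iff)
  qed
  then have "split ` pair_avoiding M u v (Suc n) \<subseteq> pair_avoiding M u v n \<times> ?Q"
    by blast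
  moreover have "inj_on split (pair_avoiding M u v (Suc n))"
  proof (rule inj_onI)
    fix i j assume i: "i \<in> pair_avoiding M u v (Suc n)" and j: "j \<in> pair_avoiding M u v (Suc n)"
      and eq: "split i = split j"
    have "i x = j x" if "x < 2*n + 2" for x
    proof (cases "x < 2*n")
      case True
      then show ?thesis using fun_cong[OF arg_cong[OF eq, of fst], of x] by (simp add: split_def)
    next
      case False
      then have "x = 2*n \<or> x = 2*n + 1" using that by auto
      then show ?thesis using eq by (auto simp: split_def)
    qed
    then show "i = j"
      using i j unfolding pair_avoiding_def by (intro PiE_ext[of i _ "\<lambda>_. {0..<M}"]) auto
  qed
  ultimately have "card (pair_avoiding M u v (Suc n)) \<le> card (pair_avoiding M u v n \<times> ?Q)"
    by (intro card_inj_on_le) (auto simp: finite_pair_avoiding)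
  also have "\<dots> \<le> (M*M - 1)^n * (M*M - 1)"
    using Suc.IH assms by (simp add: card_cartesian_product card_Diff_singleton)
  finally show ?case by (simp add: mult.commute)
qed

definition compatible_cycles :: "nat \<Rightarrow> nat \<Rightarrow> nat \<Rightarrow> (nat \<Rightarrow> nat) \<Rightarrow> (nat \<Rightarrow> nat) \<Rightarrow> (nat \<Rightarrow> nat) set" where
  "compatible_cycles M p r a b =
     {i \<in> {0..<r} \<rightarrow>\<^sub>E {0..<M}. \<forall>x<r. compatible M p a b (i x) (i ((x+1) mod r))}"

lemma finite_compatible_cycles: "finite (compatible_cycles M p r a b)"
  unfolding compatible_cycles_def
  by (rule finite_subset[OF _ finite_PiE[of "{0..<r}" "\<lambda>_. {0..<M}"]]) auto

lemma compatible_cycles_eq_PiE: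
  assumes "\<forall>u<M. \<forall>v<M. compatible M p a b u v"
  shows "compatible_cycles M p r a b = {0..<r} \<rightarrow>\<^sub>E {0..<M}"
  using assms unfolding compatible_cycles_def by (auto simp: PiE_iff extensional_def)

lemma card_compatible_cycles_le:
  assumes "u < M" "v < M" "\<not> compatible M p a b u v"
  shows "card (compatible_cycles M p r a b) \<le> M * (M*M - 1)^(r div 2)"
proof -
  let ?n = "r div 2"
  define split where "split i = (restrict i {0..<2*?n}, restrict i {2*?n..<r})" for i :: "nat \<Rightarrow> nat"
  have "split i \<in> pair_avoiding M u v ?n \<times> ({2*?n..<r} \<rightarrow>\<^sub>E {0..<M})"
    if i: "i \<in> compatible_cycles M p r a b" for i
  proof -
    have "(i (2*k), i (2*k + 1)) \<noteq> (u, v)" if "k < ?n" for k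
    proof -
      have "\<forall>x<r. compatible M p a b (i x) (i ((x+1) mod r))"
        using i by (simp add: compatible_cycles_def)
      moreover have "2*k < r" "(2*k + 1) mod r = 2*k + 1" using that by auto
      ultimately have "compatible M p a b (i (2*k)) (i (2*k + 1))"
        by metis
      then show ?thesis using assms(3) by auto
    qed
    then show ?thesis
      using i unfolding compatible_cycles_def pair_avoiding_def split_def by (auto simp: PiE_iff)
  qed
  then have "split ` compatible_cycles M p r a b \<subseteq> pair_avoiding M u v ?n \<times> ({2*?n..<r} \<rightarrow>\<^sub>E {0..<M})"
    by blast
  moreover have "inj_on split (compatible_cycles M p r a b)"
  proof (rule inj_onI)
    fix i j assume i: "i \<in> compatible_cycles M p r a b" and j: "j \<in> compatible_cycles M p r a b"
      and eq: "split i = split j"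
    have "i x = j x" if "x < r" for x
    proof (cases "x < 2*?n")
      case True
      then show ?thesis using fun_cong[OF arg_cong[OF eq, of fst], of x] by (simp add: split_def)
    next
      case False
      then show ?thesis using that fun_cong[OF arg_cong[OF eq, of snd], of x] by (simp add: split_def)
    qed
    then show "i = j"
      using i j unfolding compatible_cycles_def by (intro PiE_ext[of i _ "\<lambda>_. {0..<M}"]) auto
  qed
  ultimately have "card (compatible_cycles M p r a b)
      \<le> card (pair_avoiding M u v ?n \<times> ({2*?n..<r} \<rightarrow>\<^sub>E {0..<M}))"
    by (intro card_inj_on_le) (auto simp: finite_pair_avoiding finite_PiE)
  also have "\<dots> = card (pair_avoiding M u v ?n) * M ^ (r - 2*?n)"
    by (simp add: card_cartesian_product card_PiE)
  also have "\<dots> \<le> (M*M - 1)^?n * M"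
  proof (rule mult_mono)
    show "M ^ (r - 2*?n) \<le> M"
      using assms(1) by (cases "even r") (auto elim!: evenE oddE)
  qed (use card_pair_avoiding_le[OF assms(1,2)] in auto)
  finally show ?thesis by (simp add: mult.commute)
qed

definition solutions :: "nat \<Rightarrow> nat \<Rightarrow> nat \<Rightarrow> nat \<Rightarrow> ((nat \<Rightarrow> nat) \<times> (nat \<Rightarrow> nat) \<times> (nat \<Rightarrow> nat)) set" where
  "solutions p r M N =
     {(i, a, b). i \<in> {0..<r} \<rightarrow>\<^sub>E {0..<M} \<and> a \<in> {0..<p} \<rightarrow>\<^sub>E {0..<M} \<and>
                b \<in> {0..<p} \<rightarrow>\<^sub>E {0..<N} \<and> (\<forall>x<r. cond_E M N p r i a b x)}"

definition balanced_pairs :: "nat \<Rightarrow> nat \<Rightarrow> nat \<Rightarrow> ((nat \<Rightarrow> nat) \<times> (nat \<Rightarrow> nat)) set" where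
  "balanced_pairs p M N =
     {(a, b). a \<in> {0..<p} \<rightarrow>\<^sub>E {0..<M} \<and> b \<in> {0..<p} \<rightarrow>\<^sub>E {0..<N} \<and>
                (\<Sum>y<p. {# (a y, b y) #}) = (\<Sum>y<p. {# (a y, b ((y+1) mod p)) #})}"

lemma card_solutions_eq_sum:
  "card (solutions p r M N) =
     (\<Sum>ab\<in>({0..<p} \<rightarrow>\<^sub>E {0..<M}) \<times> ({0..<p} \<rightarrow>\<^sub>E {0..<N}). card (compatible_cycles M p r (fst ab) (snd ab)))"
proof -
  let ?AB = "({0..<p} \<rightarrow>\<^sub>E {0..<M}) \<times> ({0..<p} \<rightarrow>\<^sub>E {0..<N})"
  have "solutions p r M N = (\<lambda>(ab, i). (i, ab)) ` (SIGMA ab:?AB. compatible_cycles M p r (fst ab) (snd ab))"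
  proof (intro equalityI subsetI)
    fix z assume "z \<in> solutions p r M N"
    then obtain i a b where "z = (i, a, b)" "((a, b), i) \<in> (SIGMA ab:?AB. compatible_cycles M p r (fst ab) (snd ab))"
      by (auto simp: solutions_def compatible_cycles_def cond_E_iff_compatible)
    then show "z \<in> (\<lambda>(ab, i). (i, ab)) ` (SIGMA ab:?AB. compatible_cycles M p r (fst ab) (snd ab))"
      by (auto intro: image_eqI)
  qed (auto simp: solutions_def compatible_cycles_def cond_E_iff_compatible)
  moreover have "inj_on (\<lambda>(ab, i). (i, ab)) (SIGMA ab:?AB. compatible_cycles M p r (fst ab) (snd ab))"
    by (auto simp: inj_on_def)
  ultimately show ?thesis
    by (simp add: card_image card_SigmaI finite_PiE finite_compatible_cycles)
qed

lemma card_solutions_bounds: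
  assumes "M \<ge> 1"
  shows "card (balanced_pairs p M N) * M^r \<le> card (solutions p r M N)"
    and "card (solutions p r M N)
           \<le> card (balanced_pairs p M N) * M^r + (M^p * N^p) * (M * (M*M - 1)^(r div 2))"
proof -
  let ?AB = "({0..<p} \<rightarrow>\<^sub>E {0..<M}) \<times> ({0..<p} \<rightarrow>\<^sub>E {0..<N})"
  let ?G = "balanced_pairs p M N"
  let ?c = "\<lambda>ab. card (compatible_cycles M p r (fst ab) (snd ab))"
  have fin: "finite ?AB" by (simp add: finite_PiE)
  have G: "?G \<subseteq> ?AB" by (auto simp: balanced_pairs_def)
  have all_compatible: "(\<forall>u<M. \<forall>v<M. compatible M p (fst ab) (snd ab) u v) \<longleftrightarrow> ab \<in> ?G"
    if "ab \<in> ?AB" for ab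
  proof -
    obtain a b where ab: "ab = (a, b)" "a \<in> {0..<p} \<rightarrow>\<^sub>E {0..<M}" "b \<in> {0..<p} \<rightarrow>\<^sub>E {0..<N}"
      using \<open>ab \<in> ?AB\<close> by auto
    then have "\<forall>y<p. a y < M" by (auto simp: PiE_iff)
    then show ?thesis
      using all_compatible_iff[of p a M b] assms ab by (simp add: balanced_pairs_def)
  qed
  have balanced_count: "?c ab = M^r" if "ab \<in> ?G" for ab
    using that all_compatible[of ab] G by (auto simp: compatible_cycles_eq_PiE card_PiE)
  have unbalanced_count: "?c ab \<le> M * (M*M - 1)^(r div 2)" if "ab \<in> ?AB - ?G" for ab
    using that all_compatible[of ab] card_compatible_cycles_le by blast
  have split: "card (solutions p r M N) = card ?G * M^r + (\<Sum>ab\<in>?AB - ?G. ?c ab)"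
    unfolding card_solutions_eq_sum sum.subset_diff[OF G fin] by (simp add: balanced_count)
  then show "card ?G * M^r \<le> card (solutions p r M N)" by simp
  have "(\<Sum>ab\<in>?AB - ?G. ?c ab) \<le> card (?AB - ?G) * (M * (M*M - 1)^(r div 2))"
    using sum_bounded_above[of "?AB - ?G" ?c, OF unbalanced_count] by simp
  also have "\<dots> \<le> card ?AB * (M * (M*M - 1)^(r div 2))"
    by (intro mult_right_mono card_mono fin) auto
  finally show "card (solutions p r M N) \<le> card ?G * M^r + (M^p * N^p) * (M * (M*M - 1)^(r div 2))"
    unfolding split by (simp add: card_cartesian_product card_PiE)
qed

lemma d_pr_bounds:
  assumes "M \<ge> 1" "N \<ge> 1"
  shows "delta_p p M N \<le> d_pr p r M N"
    and "d_pr p r M N \<le> delta_p p M N + real (M * (M*M - 1)^(r div 2)) / real M ^ r"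
proof -
  have d: "d_pr p r M N = card (solutions p r M N) / (real M ^ p * real M ^ r * real N ^ p)"
    by (simp add: d_pr_def solutions_def power_add)
  have delta: "delta_p p M N = card (balanced_pairs p M N) * real M ^ r / (real M ^ p * real M ^ r * real N ^ p)"
    using assms by (simp add: delta_p_def balanced_pairs_def power_mult_distrib)
  have pos: "real M ^ p * real M ^ r * real N ^ p > 0" using assms by simp
  show "delta_p p M N \<le> d_pr p r M N"
    unfolding d delta using card_solutions_bounds(1)[OF assms(1), where p = p and r = r and N = N] pos
    by (intro divide_right_mono) (simp_all flip: of_nat_power of_nat_mult)
  have "d_pr p r M N \<le> (card (balanced_pairs p M N) * real M ^ r
        + real M ^ p * real N ^ p * real (M * (M*M - 1)^(r div 2))) / (real M ^ p * real M ^ r * real N ^ p)"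
    unfolding d using card_solutions_bounds(2)[OF assms(1), where p = p and r = r and N = N] pos
    by (intro divide_right_mono) (simp_all flip: of_nat_power of_nat_mult)
  also have "\<dots> = delta_p p M N + real (M * (M*M - 1)^(r div 2)) / real M ^ r"
    unfolding delta using pos assms by (simp add: field_simps)
  finally show "d_pr p r M N \<le> delta_p p M N + real (M * (M*M - 1)^(r div 2)) / real M ^ r" .
qed

lemma tendsto_unbalanced_fraction:
  assumes "M \<ge> 1"
  shows "(\<lambda>r. real (M * (M*M - 1)^(r div 2)) / real M ^ r) \<longlonglongrightarrow> 0"
proof -
  define q where "q = real (M*M - 1) / real (M*M)"
  have "1 \<le> real M * real M"
    using assms mult_mono[of 1 "real M" 1 "real M"] by simp
  then have q: "0 \<le> q" "q < 1"
    using assms by (auto simp: q_def)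
  from q have lim: "(\<lambda>r. real M * q ^ (r div 2)) \<longlonglongrightarrow> 0"
    by (intro tendsto_mult_right_zero filterlim_compose[OF LIMSEQ_power_zero]
      filterlim_at_top_div_const_nat) auto
  have bound: "real (M * (M*M - 1)^(r div 2)) / real M ^ r \<le> real M * q ^ (r div 2)" for r
  proof -
    have "real (M*M) ^ (r div 2) = real M ^ (2 * (r div 2))"
      by (simp add: power_mult power2_eq_square)
    also have "\<dots> \<le> real M ^ r"
      using assms by (intro power_increasing) auto
    finally have "real (M*M) ^ (r div 2) \<le> real M ^ r" .
    then have "real (M * (M*M - 1)^(r div 2)) / real M ^ r
        \<le> real (M * (M*M - 1)^(r div 2)) / real (M*M) ^ (r div 2)"
      using assms by (intro divide_left_mono of_nat_0_le_iff) auto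
    then show ?thesis by (simp add: q_def power_divide)
  qed
  show ?thesis
  proof (rule tendsto_sandwich[OF _ _ tendsto_const lim])
    show "\<forall>\<^sub>F r in sequentially. 0 \<le> real (M * (M*M - 1)^(r div 2)) / real M ^ r"
      by (intro always_eventually allI divide_nonneg_nonneg) simp_all
    show "\<forall>\<^sub>F r in sequentially. real (M * (M*M - 1)^(r div 2)) / real M ^ r \<le> real M * q ^ (r div 2)"
      using bound by (intro always_eventually) blast
  qed
qed

theorem theorem5p4:
  fixes p M N :: nat
  assumes "p \<ge> 1" and "M \<ge> 1" and "N \<ge> 1"
  shows "(\<lambda>r. d_pr p r M N) \<longlonglongrightarrow> delta_p p M N"
proof (rule tendsto_sandwich)
  show "\<forall>\<^sub>F r in sequentially. delta_p p M N \<le> d_pr p r M N"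
    using d_pr_bounds(1)[OF assms(2,3)] by simp
  show "\<forall>\<^sub>F r in sequentially. d_pr p r M N \<le> delta_p p M N + real (M * (M*M - 1)^(r div 2)) / real M ^ r"
    using d_pr_bounds(2)[OF assms(2,3)] by simp
  show "(\<lambda>r. delta_p p M N + real (M * (M*M - 1)^(r div 2)) / real M ^ r) \<longlonglongrightarrow> delta_p p M N"
    using tendsto_add[OF tendsto_const tendsto_unbalanced_fraction[OF assms(2)]] by simp
qed simp

end
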